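(* Let $\mathcal{A}$ be a deterministic adaptive algorithm that is $(\alpha,\beta)$-instance optimal on graphs with $n$ vertices for parameter $k$. Then $\alpha^2\beta=\Omega(n/k)$.
   Context: Graphs are undirected with known edge weights and unique shortest paths; edges have distinct capacities unknown to the algorithm. For vertices $s,t$, $P(s,t)$ is the unique shortest path; an edge on $P(s,t)$ is a bottleneck edge of $P(s,t)$ if its capacity is strictly smaller than that of every other edge of $P(s,t)$. Selecting $s$ as a vantage point reveals the bottleneck edge of $P(s,t)$ and its capacity for every $t\neq s$; a set of vantage points reveals the union. An adaptive algorithm selects vantage points one at a time, learning the edges revealed by each selection before choosing the next. For an instance $I=(G,c)$, $OPT(I)$ is the maximum number of edges revealed by any set of $k$ vertices. An algorithm is $(\alpha,\beta)$-instance optimal ($\alpha,\beta\ge1$) if on every instance $I$ it selects at most $\alpha k$ vantage points and reveals at least $OPT(I)/\beta$ edges. *)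

theory Defs
  imports Complex_Main
begin

text \<open>Vertices of an n-vertex graph are 0,...,n-1; an undirected edge is a
2-element vertex set. Weights w and capacities c are functions on edges.\<close>

type_synonym edge = "nat set"

definition is_path :: "edge set \<Rightarrow> nat \<Rightarrow> nat \<Rightarrow> nat list \<Rightarrow> bool" where
  "is_path E s t p \<longleftrightarrow> p \<noteq> [] \<and> hd p = s \<and> last p = t \<and> distinct p \<and>
     (\<forall>i < length p - 1. {p ! i, p ! Suc i} \<in> E)"

definition path_edges :: "nat list \<Rightarrow> edge set" where
  "path_edges p = {{p ! i, p ! Suc i} | i. i < length p - 1}"

definition path_weight :: "(edge \<Rightarrow> real) \<Rightarrow> nat list \<Rightarrow> real" where
  "path_weight w p = (\<Sum>i < length p - 1. w {p ! i, p ! Suc i})"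

definition is_shortest_path :: "edge set \<Rightarrow> (edge \<Rightarrow> real) \<Rightarrow> nat \<Rightarrow> nat \<Rightarrow> nat list \<Rightarrow> bool" where
  "is_shortest_path E w s t p \<longleftrightarrow> is_path E s t p \<and>
     (\<forall>q. is_path E s t q \<longrightarrow> path_weight w p \<le> path_weight w q)"

definition valid_instance :: "nat \<Rightarrow> edge set \<Rightarrow> (edge \<Rightarrow> real) \<Rightarrow> (edge \<Rightarrow> real) \<Rightarrow> bool" where
  "valid_instance n E w c \<longleftrightarrow>
     (\<forall>e\<in>E. e \<subseteq> {..<n} \<and> card e = 2) \<and>
     (\<forall>e\<in>E. w e > 0) \<and>
     inj_on c E \<and>
     (\<forall>s<n. \<forall>t<n. \<exists>!p. is_shortest_path E w s t p)"

definition SP :: "edge set \<Rightarrow> (edge \<Rightarrow> real) \<Rightarrow> nat \<Rightarrow> nat \<Rightarrow> nat list" where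
  "SP E w s t = (THE p. is_shortest_path E w s t p)"

definition bottleneck :: "edge set \<Rightarrow> (edge \<Rightarrow> real) \<Rightarrow> (edge \<Rightarrow> real) \<Rightarrow> nat \<Rightarrow> nat \<Rightarrow> edge" where
  "bottleneck E w c s t = (THE e. e \<in> path_edges (SP E w s t) \<and>
      (\<forall>e' \<in> path_edges (SP E w s t). e' \<noteq> e \<longrightarrow> c e < c e'))"

definition revealed_by :: "nat \<Rightarrow> edge set \<Rightarrow> (edge \<Rightarrow> real) \<Rightarrow> (edge \<Rightarrow> real) \<Rightarrow> nat \<Rightarrow> edge set" where
  "revealed_by n E w c s = (if s < n then {bottleneck E w c s t | t. t < n \<and> t \<noteq> s} else {})"

definition revealed :: "nat \<Rightarrow> edge set \<Rightarrow> (edge \<Rightarrow> real) \<Rightarrow> (edge \<Rightarrow> real) \<Rightarrow> nat set \<Rightarrow> edge set" where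
  "revealed n E w c S = (\<Union>s\<in>S. revealed_by n E w c s)"

definition OPT :: "nat \<Rightarrow> edge set \<Rightarrow> (edge \<Rightarrow> real) \<Rightarrow> (edge \<Rightarrow> real) \<Rightarrow> nat \<Rightarrow> nat" where
  "OPT n E w c k = Max ((\<lambda>S. card (revealed n E w c S)) ` {S. S \<subseteq> {..<n} \<and> card S \<le> k})"

type_synonym observation = "nat \<Rightarrow> (edge \<times> real) option"

definition observe :: "nat \<Rightarrow> edge set \<Rightarrow> (edge \<Rightarrow> real) \<Rightarrow> (edge \<Rightarrow> real) \<Rightarrow> nat \<Rightarrow> observation" where
  "observe n E w c s = (\<lambda>t. if s < n \<and> t < n \<and> t \<noteq> s
       then Some (bottleneck E w c s t, c (bottleneck E w c s t)) else None)"

type_synonym history = "(nat \<times> observation) list"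

text \<open>A deterministic adaptive algorithm: given the known data (n, edges, weights) and
the history of previous selections with their observations, it either selects the next
vantage point (Some v) or stops (None). It does not know the capacities.\<close>
type_synonym algorithm = "nat \<Rightarrow> edge set \<Rightarrow> (edge \<Rightarrow> real) \<Rightarrow> history \<Rightarrow> nat option"

primrec run :: "algorithm \<Rightarrow> nat \<Rightarrow> edge set \<Rightarrow> (edge \<Rightarrow> real) \<Rightarrow> (edge \<Rightarrow> real) \<Rightarrow> nat \<Rightarrow> history" where
  "run A n E w c 0 = []"
| "run A n E w c (Suc i) = (case A n E w (run A n E w c i) of
       None \<Rightarrow> run A n E w c i
     | Some v \<Rightarrow> run A n E w c i @ [(v, observe n E w c v)])"

definition selected :: "algorithm \<Rightarrow> nat \<Rightarrow> edge set \<Rightarrow> (edge \<Rightarrow> real) \<Rightarrow> (edge \<Rightarrow> real) \<Rightarrow> nat set" where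
  "selected A n E w c = (\<Union>i. fst ` set (run A n E w c i))"

definition instance_optimal :: "algorithm \<Rightarrow> nat \<Rightarrow> nat \<Rightarrow> real \<Rightarrow> real \<Rightarrow> bool" where
  "instance_optimal A n k \<alpha> \<beta> \<longleftrightarrow> \<alpha> \<ge> 1 \<and> \<beta> \<ge> 1 \<and>
     (\<forall>E w c. valid_instance n E w c \<longrightarrow>
        (\<forall>i. real (length (run A n E w c i)) \<le> \<alpha> * real k) \<and>
        real (card (revealed n E w c (selected A n E w c))) \<ge> real (OPT n E w c k) / \<beta>)"

end

theory Submission
  imports Defs "HOL-Library.Sublist"
begin

text \<open>
  Run the algorithm on the path \<open>0 - 1 - \<dots> - (n - 1)\<close> with unit weights against an
  adversary that fixes capacities lazily. An edge touched by (incident to) a selected vertex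
  gets a negative capacity, the lower the earlier it was first touched; untouched edges get
  positive capacities decreasing from left to right. Seen from a selected vertex, every
  bottleneck is then a touched edge, and later selections never undercut an edge touched
  earlier, so all answers agree with the single instance determined by the final list \<open>F\<close>
  of selections. On that instance the algorithm reveals at most \<open>2 |F| \<le> 2 \<alpha> k\<close> edges.
  Cut the path into blocks of \<open>g\<close> vertices with \<open>n / g \<ge> 2 \<alpha> k\<close>: at least \<open>k\<close> blocks
  contain no selected vertex, and selecting the left end of such a block reveals all its
  \<open>g - 1\<close> edges, so \<open>OPT \<ge> k (g - 1)\<close>. Instance optimality forces \<open>g - 1 \<le> 2 \<alpha> \<beta>\<close>, and
  \<open>g \<approx> n / (2 \<alpha> k)\<close> gives \<open>n \<le> 16 \<alpha>\<^sup>2 \<beta> k\<close>.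
\<close>

section \<open>The path graph\<close>

definition path_graph :: "nat \<Rightarrow> edge set" where
  "path_graph n = {{j, Suc j} | j. Suc j < n}"

definition interval_path :: "nat \<Rightarrow> nat \<Rightarrow> nat list" where
  "interval_path s t = (if s \<le> t then [s..<Suc t] else rev [t..<Suc s])"

lemma path_graph_edgeE:
  assumes "e \<in> path_graph n"
  obtains j where "e = {j, Suc j}" "Suc j < n"
  using assms by (auto simp: path_graph_def)

lemma doubleton_in_path_graph_iff:
  "{a, b} \<in> path_graph n \<longleftrightarrow> (b = Suc a \<or> a = Suc b) \<and> max a b < n"
  by (auto simp: path_graph_def doubleton_eq_iff)

lemma finite_path_graph: "finite (path_graph n)"
proof -
  have "path_graph n \<subseteq> (\<lambda>j. {j, Suc j}) ` {..<n}"
    by (auto simp: path_graph_def)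
  then show ?thesis
    by (rule finite_subset) simp
qed

lemma path_graph_edge_eqI:
  "e \<in> path_graph n \<Longrightarrow> e' \<in> path_graph n \<Longrightarrow> Min e = Min e' \<Longrightarrow> e = e'"
  by (elim path_graph_edgeE) simp

lemma interval_path_same [simp]: "interval_path s s = [s]"
  by (simp add: interval_path_def)

lemma interval_path_up: "s < t \<Longrightarrow> interval_path s t = s # interval_path (Suc s) t"
  by (simp add: interval_path_def upt_conv_Cons del: upt_Suc)

lemma interval_path_down: "t < s \<Longrightarrow> interval_path s t = s # interval_path (s - 1) t"
  by (cases s) (auto simp: interval_path_def)

lemma interval_path_ne [simp]: "interval_path s t \<noteq> []"
  by (simp add: interval_path_def)

lemma hd_interval_path [simp]: "hd (interval_path s t) = s"
  by (cases s t rule: linorder_cases) (auto simp: interval_path_up interval_path_down)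

lemma set_interval_path: "set (interval_path s t) = {min s t..max s t}"
  by (auto simp: interval_path_def)

lemma is_path_Cons:
  "is_path E s t (x # p) \<longleftrightarrow> x = s \<and> (if p = [] then s = t
     else {s, hd p} \<in> E \<and> s \<notin> set p \<and> is_path E (hd p) t p)"
proof (cases p)
  case (Cons y q)
  have "(\<forall>i < length (x # p) - 1. {(x # p) ! i, (x # p) ! Suc i} \<in> E) \<longleftrightarrow>
        {x, y} \<in> E \<and> (\<forall>i < length p - 1. {p ! i, p ! Suc i} \<in> E)"
    using Cons by (auto simp: less_Suc_eq_0_disj)
  then show ?thesis
    using Cons by (auto simp: is_path_def)
qed (auto simp: is_path_def)

lemma is_path_interval_path:
  assumes "s < n" "t < n"
  shows "is_path (path_graph n) s t (interval_path s t)"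
  using assms(1)
proof (induction s rule: measure_induct_rule[where f = "\<lambda>s. if s \<le> t then t - s else s - t"])
  case (less s)
  consider "s = t" | "s < t" | "t < s"
    by linarith
  then show ?case
  proof cases
    case 1
    then show ?thesis
      by (simp add: is_path_def)
  next
    case 2
    then have "is_path (path_graph n) (Suc s) t (interval_path (Suc s) t)"
      using less.IH[of "Suc s"] assms(2) by auto
    then show ?thesis
      using 2 assms(2)
      by (auto simp: interval_path_up is_path_Cons doubleton_in_path_graph_iff set_interval_path)
  next
    case 3
    then have "is_path (path_graph n) (s - 1) t (interval_path (s - 1) t)"
      using less.IH[of "s - 1"] less.prems by (cases "s - 1 \<le> t") auto
    then show ?thesis
      using 3 less.prems
      by (auto simp: interval_path_down is_path_Cons doubleton_in_path_graph_iff set_interval_path)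
  qed
qed

lemma is_path_path_graph_unique:
  "is_path (path_graph n) s t p \<Longrightarrow> p = interval_path s t"
proof (induction p arbitrary: s)
  case Nil
  then show ?case
    by (simp add: is_path_def)
next
  case (Cons x p)
  show ?case
  proof (cases "p = []")
    case True
    then show ?thesis
      using Cons.prems by (simp add: is_path_Cons)
  next
    case False
    define y where "y = hd p"
    with Cons False have x: "x = s" and step: "{s, y} \<in> path_graph n"
      and fresh: "s \<notin> set p" and p: "p = interval_path y t"
      by (auto simp: is_path_Cons)
    from step consider "y = Suc s" | "s = Suc y"
      by (auto simp: doubleton_in_path_graph_iff)
    then show ?thesis
    proof cases
      case 1
      with fresh p have "s < t"
        by (auto simp: set_interval_path)
      with 1 p x show ?thesis
        by (simp add: interval_path_up)
    next
      case 2
      with fresh p have "t < s"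
        by (auto simp: set_interval_path)
      with 2 p x show ?thesis
        by (simp add: interval_path_down)
    qed
  qed
qed

lemma is_shortest_path_path_graph_iff:
  assumes "s < n" "t < n"
  shows "is_shortest_path (path_graph n) w s t p \<longleftrightarrow> p = interval_path s t"
  using is_path_interval_path[OF assms] is_path_path_graph_unique
  unfolding is_shortest_path_def by blast

lemma SP_path_graph: "s < n \<Longrightarrow> t < n \<Longrightarrow> SP (path_graph n) w s t = interval_path s t"
  by (simp add: SP_def is_shortest_path_path_graph_iff)

lemma valid_instance_path_graph:
  "inj_on c (path_graph n) \<Longrightarrow> valid_instance n (path_graph n) (\<lambda>_. 1) c"
  by (auto simp: valid_instance_def is_shortest_path_path_graph_iff elim!: path_graph_edgeE)

section \<open>Bottlenecks\<close>

lemma path_edges_subset: "is_path E s t p \<Longrightarrow> path_edges p \<subseteq> E"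
  by (auto simp: is_path_def path_edges_def)

lemma path_edges_conv_image: "path_edges p = (\<lambda>i. {p ! i, p ! Suc i}) ` {..<length p - 1}"
  by (auto simp: path_edges_def)

lemma finite_path_edges: "finite (path_edges p)"
  by (simp add: path_edges_conv_image)

lemma first_edge_in_path_edges:
  assumes "is_path E s t p" "s \<noteq> t"
  obtains y where "{s, y} \<in> path_edges p"
proof -
  obtain q where p: "p = s # q" and "q \<noteq> []"
    using assms by (cases p) (auto simp: is_path_def split: if_splits)
  then have "{p ! 0, p ! Suc 0} \<in> path_edges p"
    unfolding path_edges_def by force
  with p that show ?thesis
    by simp
qed

lemma path_edges_interval_path:
  assumes "s \<le> t"
  shows "path_edges (interval_path s t) = (\<lambda>j. {j, Suc j}) ` {s..<t}"
proof -
  have "path_edges (interval_path s t) =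
      (\<lambda>i. {[s..<Suc t] ! i, [s..<Suc t] ! Suc i}) ` {..<t - s}"
    using assms by (simp add: path_edges_conv_image interval_path_def del: upt_Suc)
  also have "\<dots> = (\<lambda>i. {s + i, Suc (s + i)}) ` {..<t - s}"
    by (rule image_cong) (auto simp: nth_upt simp del: upt_Suc)
  also have "\<dots> = (\<lambda>j. {j, Suc j}) ` plus s ` {0..<t - s}"
    by (simp only: image_image atLeast0LessThan)
  also have "\<dots> = (\<lambda>j. {j, Suc j}) ` {s..<t}"
    using assms by simp
  finally show ?thesis .
qed

lemma ex_strict_min_inj_on:
  fixes c :: "'a \<Rightarrow> 'b::linorder"
  assumes "finite X" "X \<noteq> {}" "inj_on c X"
  obtains e where "e \<in> X" "\<And>e'. e' \<in> X \<Longrightarrow> e' \<noteq> e \<Longrightarrow> c e < c e'"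
proof -
  have "Min (c ` X) \<in> c ` X"
    using assms(1,2) by simp
  then obtain e where e: "e \<in> X" "c e = Min (c ` X)"
    by auto
  have "c e < c e'" if "e' \<in> X" "e' \<noteq> e" for e'
    using that e assms(1) inj_on_eq_iff[OF assms(3)]
    by (metis Min_le finite_imageI imageI order_neq_le_trans)
  with e that show ?thesis
    by blast
qed

lemma bottleneck_eqI:
  assumes "e \<in> path_edges (SP E w s t)"
    and "\<And>e'. e' \<in> path_edges (SP E w s t) \<Longrightarrow> e' \<noteq> e \<Longrightarrow> c e < c e'"
  shows "bottleneck E w c s t = e"
  unfolding bottleneck_def
proof (rule the_equality)
  fix e'
  assume e': "e' \<in> path_edges (SP E w s t) \<and>
    (\<forall>e''\<in>path_edges (SP E w s t). e'' \<noteq> e' \<longrightarrow> c e' < c e'')"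
  show "e' = e"
  proof (rule ccontr)
    assume "e' \<noteq> e"
    with e' assms have "c e < c e'" "c e' < c e"
      by auto
    then show False
      by simp
  qed
qed (use assms in blast)

lemma bottleneck_strict_min:
  fixes E w s t and c :: "edge \<Rightarrow> real"
  defines "P \<equiv> path_edges (SP E w s t)" and "b \<equiv> bottleneck E w c s t"
  assumes "P \<noteq> {}" "inj_on c P"
  shows "b \<in> P" and "\<And>e. e \<in> P \<Longrightarrow> e \<noteq> b \<Longrightarrow> c b < c e"
proof -
  obtain b' where b': "b' \<in> P" "\<And>e. e \<in> P \<Longrightarrow> e \<noteq> b' \<Longrightarrow> c b' < c e"
    using ex_strict_min_inj_on[OF _ assms(3,4)] finite_path_edges unfolding P_def by blast
  moreover from b' have "b = b'"
    unfolding P_def b_def by (rule bottleneck_eqI)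
  ultimately show "b \<in> P" and "\<And>e. e \<in> P \<Longrightarrow> e \<noteq> b \<Longrightarrow> c b < c e"
    by auto
qed

lemma path_edges_SP_path_graph:
  assumes "s < n" "t < n"
  shows "path_edges (SP (path_graph n) w s t) \<subseteq> path_graph n"
  using path_edges_subset[OF is_path_interval_path[OF assms]] SP_path_graph[OF assms] by simp

lemma first_edge_SP_path_graph:
  assumes "s < n" "t < n" "s \<noteq> t"
  obtains y where "{s, y} \<in> path_edges (SP (path_graph n) w s t)"
  using first_edge_in_path_edges[OF is_path_interval_path[OF assms(1,2)] assms(3)]
    SP_path_graph[OF assms(1,2)] by metis

lemma bottleneck_path_graph:
  fixes n w s t and c :: "edge \<Rightarrow> real"
  defines "P \<equiv> path_edges (SP (path_graph n) w s t)"
    and "b \<equiv> bottleneck (path_graph n) w c s t"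
  assumes "s < n" "t < n" "s \<noteq> t" "inj_on c (path_graph n)"
  shows "b \<in> P" and "\<And>e. e \<in> P \<Longrightarrow> e \<noteq> b \<Longrightarrow> c b < c e"
proof -
  have "P \<noteq> {}"
    using first_edge_SP_path_graph[OF assms(3-5)] unfolding P_def by blast
  moreover have "inj_on c P"
    using assms(6) path_edges_SP_path_graph[OF assms(3,4)] unfolding P_def by (rule inj_on_subset)
  ultimately show "b \<in> P" and "\<And>e. e \<in> P \<Longrightarrow> e \<noteq> b \<Longrightarrow> c b < c e"
    unfolding P_def b_def by (rule bottleneck_strict_min)+
qed

section \<open>The adversary\<close>

definition touches :: "nat list \<Rightarrow> edge \<Rightarrow> bool" where
  "touches F e \<longleftrightarrow> (\<exists>x\<in>set F. x \<in> e)"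

definition first_touch :: "nat list \<Rightarrow> edge \<Rightarrow> nat" where
  "first_touch F e = length (takeWhile (\<lambda>x. x \<notin> e) F)"

definition adversary_key :: "nat \<Rightarrow> nat list \<Rightarrow> edge \<Rightarrow> nat" where
  "adversary_key n F e = first_touch F e * n + Min e"

definition adversary_cap :: "nat \<Rightarrow> nat list \<Rightarrow> edge \<Rightarrow> real" where
  "adversary_cap n F e =
     (if touches F e then - 1 / (real (adversary_key n F e) + 1)
      else 1 / (real (Min e) + 1))"

lemma adversary_cap_touched_neg: "touches F e \<Longrightarrow> adversary_cap n F e < 0"
  by (simp add: adversary_cap_def)

lemma adversary_cap_untouched_pos: "\<not> touches F e \<Longrightarrow> 0 < adversary_cap n F e"
  by (simp add: adversary_cap_def)

lemma inj_on_adversary_cap: "inj_on (adversary_cap n F) (path_graph n)"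
proof (rule inj_onI)
  fix e e'
  assume e: "e \<in> path_graph n" and e': "e' \<in> path_graph n"
    and eq: "adversary_cap n F e = adversary_cap n F e'"
  have "Min e < n" "Min e' < n"
    using e e' by (auto elim!: path_graph_edgeE)
  have "touches F e \<longleftrightarrow> touches F e'"
    using eq adversary_cap_touched_neg adversary_cap_untouched_pos by (metis less_asym)
  then have "Min e = Min e' \<or> adversary_key n F e = adversary_key n F e'"
    using eq by (auto simp: adversary_cap_def split: if_splits)
  then have "Min e = Min e'"
    using \<open>Min e < n\<close> \<open>Min e' < n\<close> unfolding adversary_key_def
    by (metis mod_less mod_mult_self3)
  with e e' show "e = e'"
    by (rule path_graph_edge_eqI)
qed

lemma first_touch_less_length: "touches F e \<Longrightarrow> first_touch F e < length F"
  by (induction F) (auto simp: touches_def first_touch_def)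

lemma first_touch_append: "touches F e \<Longrightarrow> first_touch (F @ ws) e = first_touch F e"
  by (auto simp: touches_def first_touch_def)

lemma length_le_first_touch_append: "\<not> touches F e \<Longrightarrow> length F \<le> first_touch (F @ ws) e"
  by (auto simp: touches_def first_touch_def)

lemma adversary_cap_append:
  assumes "touches F e"
  shows "adversary_cap n (F @ ws) e = adversary_cap n F e"
proof -
  have "touches (F @ ws) e"
    using assms by (auto simp: touches_def)
  with assms show ?thesis
    by (simp add: adversary_cap_def adversary_key_def first_touch_append)
qed

lemma adversary_cap_append_less:
  assumes "touches F b" "b \<in> path_graph n" "adversary_cap n F b < adversary_cap n F e"
  shows "adversary_cap n (F @ ws) b < adversary_cap n (F @ ws) e"
proof (cases "touches F e")
  case True
  with assms show ?thesis
    by (simp add: adversary_cap_append)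
next
  case untouched: False
  have b_neg: "adversary_cap n (F @ ws) b < 0"
    using assms(1) by (simp add: adversary_cap_append adversary_cap_touched_neg)
  show ?thesis
  proof (cases "touches (F @ ws) e")
    case False
    with b_neg show ?thesis
      using adversary_cap_untouched_pos[of "F @ ws" e n] by linarith
  next
    case True
    have "Min b < n"
      using assms(2) by (auto elim!: path_graph_edgeE)
    then have "adversary_key n F b < Suc (first_touch F b) * n"
      by (simp add: adversary_key_def)
    also have "\<dots> \<le> first_touch (F @ ws) e * n"
      using first_touch_less_length[OF assms(1)]
        length_le_first_touch_append[OF untouched, of ws]
      by (intro mult_right_mono) auto
    also have "\<dots> \<le> adversary_key n (F @ ws) e"
      by (simp add: adversary_key_def)
    finally have "1 / (real (adversary_key n (F @ ws) e) + 1) <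
                  1 / (real (adversary_key n F b) + 1)"
      by (intro divide_strict_left_mono) auto
    moreover have "adversary_cap n (F @ ws) b = - 1 / (real (adversary_key n F b) + 1)"
      using assms(1) by (simp only: adversary_cap_append) (simp add: adversary_cap_def)
    ultimately show ?thesis
      using True by (simp add: adversary_cap_def)
  qed
qed

lemma touches_adversary_bottleneck:
  assumes "s < n" "t < n" "s \<noteq> t" "s \<in> set F"
  shows "touches F (bottleneck (path_graph n) w (adversary_cap n F) s t)"
proof (rule ccontr)
  let ?b = "bottleneck (path_graph n) w (adversary_cap n F) s t"
  assume untouched: "\<not> touches F ?b"
  obtain y where y: "{s, y} \<in> path_edges (SP (path_graph n) w s t)"
    using first_edge_SP_path_graph[OF assms(1-3)] .
  have "touches F {s, y}"
    using assms(4) by (auto simp: touches_def)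
  with untouched have "{s, y} \<noteq> ?b"
    by auto
  then have "adversary_cap n F ?b < adversary_cap n F {s, y}"
    by (rule bottleneck_path_graph(2)[OF assms(1-3) inj_on_adversary_cap y])
  with untouched \<open>touches F {s, y}\<close> show False
    using adversary_cap_touched_neg adversary_cap_untouched_pos
    by (metis less_asym order.strict_trans)
qed

lemma bottleneck_adversary_append:
  assumes "s < n" "t < n" "s \<noteq> t" "s \<in> set F"
  shows "bottleneck (path_graph n) w (adversary_cap n (F @ ws)) s t =
         bottleneck (path_graph n) w (adversary_cap n F) s t"
proof (rule bottleneck_eqI)
  let ?b = "bottleneck (path_graph n) w (adversary_cap n F) s t"
  show b: "?b \<in> path_edges (SP (path_graph n) w s t)"
    by (rule bottleneck_path_graph(1)[OF assms(1-3) inj_on_adversary_cap])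
  fix e
  assume "e \<in> path_edges (SP (path_graph n) w s t)" "e \<noteq> ?b"
  then have "adversary_cap n F ?b < adversary_cap n F e"
    by (rule bottleneck_path_graph(2)[OF assms(1-3) inj_on_adversary_cap])
  with b path_edges_SP_path_graph[OF assms(1,2)]
  show "adversary_cap n (F @ ws) ?b < adversary_cap n (F @ ws) e"
    by (intro adversary_cap_append_less[OF touches_adversary_bottleneck[OF assms]]) auto
qed

lemma observe_adversary_append:
  assumes "v \<in> set F"
  shows "observe n (path_graph n) w (adversary_cap n (F @ ws)) v =
         observe n (path_graph n) w (adversary_cap n F) v"
  using assms bottleneck_adversary_append touches_adversary_bottleneck adversary_cap_append
  by (auto simp: observe_def)

section \<open>Simulating the algorithm against the adversary\<close>

primrec adversary_history :: "algorithm \<Rightarrow> nat \<Rightarrow> nat \<Rightarrow> history" where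
  "adversary_history A n 0 = []"
| "adversary_history A n (Suc i) =
     (case A n (path_graph n) (\<lambda>_. 1) (adversary_history A n i) of
        None \<Rightarrow> adversary_history A n i
      | Some v \<Rightarrow> adversary_history A n i @
          [(v, observe n (path_graph n) (\<lambda>_. 1)
                 (adversary_cap n (map fst (adversary_history A n i) @ [v])) v)])"

lemma prefix_adversary_history:
  "i \<le> j \<Longrightarrow> prefix (adversary_history A n i) (adversary_history A n j)"
proof (induction j rule: dec_induct)
  case (step j)
  then show ?case
    by (auto split: option.split)
qed simp

lemma length_adversary_history:
  "(\<And>i. i < N \<Longrightarrow> A n (path_graph n) (\<lambda>_. 1) (adversary_history A n i) \<noteq> None) \<Longrightarrow>
   length (adversary_history A n N) = N"
  by (induction N) (auto split: option.split)

lemma run_adversary: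
  "prefix (map fst (adversary_history A n i)) F \<Longrightarrow>
   run A n (path_graph n) (\<lambda>_. 1) (adversary_cap n F) i = adversary_history A n i"
proof (induction i)
  case (Suc i)
  have "prefix (map fst (adversary_history A n i)) F"
    using map_mono_prefix[OF prefix_adversary_history[of i "Suc i"]] Suc.prems
    by (meson le_SucI order_refl prefix_order.trans)
  then have IH: "run A n (path_graph n) (\<lambda>_. 1) (adversary_cap n F) i = adversary_history A n i"
    by (rule Suc.IH)
  show ?case
  proof (cases "A n (path_graph n) (\<lambda>_. 1) (adversary_history A n i)")
    case None
    with IH show ?thesis
      by simp
  next
    case (Some v)
    with Suc.prems obtain ws where "F = (map fst (adversary_history A n i) @ [v]) @ ws"
      by (auto simp: prefix_def)
    with IH Some show ?thesis
      by (simp del: append_assoc add: observe_adversary_append)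
  qed
qed simp

lemma run_stopped:
  assumes "A n E w (run A n E w c i) = None" "i \<le> j"
  shows "run A n E w c j = run A n E w c i"
  using assms(2) by (induction j rule: dec_induct) (simp_all add: assms(1))

lemma selected_adversary_subset:
  assumes "length (adversary_history A n N) < N"
  defines "F \<equiv> map fst (adversary_history A n N)"
  shows "selected A n (path_graph n) (\<lambda>_. 1) (adversary_cap n F) \<subseteq> set F"
proof -
  let ?run = "run A n (path_graph n) (\<lambda>_. 1) (adversary_cap n F)"
  obtain i0 where i0: "i0 < N" "A n (path_graph n) (\<lambda>_. 1) (adversary_history A n i0) = None"
    using length_adversary_history[of N A n] assms(1) by auto
  have run_eq: "?run i = adversary_history A n i" if "i \<le> N" for i
    unfolding F_def by (intro run_adversary map_mono_prefix prefix_adversary_history that)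
  have "prefix (?run i) (adversary_history A n N)" for i
  proof (cases "i \<le> i0")
    case True
    with i0 show ?thesis
      by (simp add: run_eq prefix_adversary_history)
  next
    case False
    with i0 run_eq[of i0] have "?run i = adversary_history A n i0"
      using run_stopped[of A n "path_graph n" "\<lambda>_. 1" "adversary_cap n F" i0 i] by simp
    with i0 show ?thesis
      by (simp add: prefix_adversary_history)
  qed
  then show ?thesis
    unfolding selected_def F_def by (force dest: set_mono_prefix)
qed

section \<open>Revealed edges versus OPT on the adversary's instance\<close>

lemma revealed_adversary_subset:
  assumes "S \<subseteq> set F"
  shows "revealed n (path_graph n) w (adversary_cap n F) S \<subseteq> {e \<in> path_graph n. touches F e}"
proof
  fix e
  assume "e \<in> revealed n (path_graph n) w (adversary_cap n F) S"
  then obtain s t where st: "s \<in> S" "s < n" "t < n" "s \<noteq> t"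
    and e: "e = bottleneck (path_graph n) w (adversary_cap n F) s t"
    by (auto simp: revealed_def revealed_by_def split: if_splits)
  have "e \<in> path_graph n"
    using bottleneck_path_graph(1)[OF st(2-4) inj_on_adversary_cap]
      path_edges_SP_path_graph[OF st(2,3)] e
    by blast
  moreover have "touches F e"
    using touches_adversary_bottleneck st assms e by blast
  ultimately show "e \<in> {e \<in> path_graph n. touches F e}"
    by simp
qed

lemma card_touched_edges_le: "card {e \<in> path_graph n. touches F e} \<le> 2 * card (set F)"
proof -
  have "{e \<in> path_graph n. touches F e} \<subseteq>
        (\<lambda>x. {x - 1, x}) ` set F \<union> (\<lambda>x. {x, Suc x}) ` set F"
  proof
    fix e
    assume "e \<in> {e \<in> path_graph n. touches F e}"
    then obtain j x where "e = {j, Suc j}" "x \<in> set F" "x \<in> e"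
      by (auto simp: touches_def elim!: path_graph_edgeE)
    then have "e = {x - 1, x} \<or> e = {x, Suc x}"
      by auto
    with \<open>x \<in> set F\<close> show "e \<in> (\<lambda>x. {x - 1, x}) ` set F \<union> (\<lambda>x. {x, Suc x}) ` set F"
      by blast
  qed
  then have "card {e \<in> path_graph n. touches F e} \<le>
             card ((\<lambda>x. {x - 1, x}) ` set F \<union> (\<lambda>x. {x, Suc x}) ` set F)"
    by (intro card_mono) auto
  also have "\<dots> \<le> card (set F) + card (set F)"
    by (intro card_Un_le[THEN order_trans] add_mono card_image_le) auto
  finally show ?thesis
    by simp
qed

lemma card_revealed_le_OPT:
  assumes "S \<subseteq> {..<n}" "card S \<le> k"
  shows "card (revealed n E w c S) \<le> OPT n E w c k"
proof -
  have "finite {S. S \<subseteq> {..<n} \<and> card S \<le> k}"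
    by (rule finite_subset[of _ "Pow {..<n}"]) auto
  with assms show ?thesis
    unfolding OPT_def by (intro Max_ge finite_imageI) auto
qed

lemma adversary_bottleneck_untouched_segment:
  assumes "a \<le> j" "Suc j < n" "set F \<inter> {a..Suc j} = {}"
  shows "bottleneck (path_graph n) w (adversary_cap n F) a (Suc j) = {j, Suc j}"
proof (rule bottleneck_eqI)
  have PE: "path_edges (SP (path_graph n) w a (Suc j)) = (\<lambda>i. {i, Suc i}) ` {a..<Suc j}"
    using assms by (simp add: SP_path_graph path_edges_interval_path)
  have cap: "adversary_cap n F {i, Suc i} = 1 / (real i + 1)" if "i \<in> {a..<Suc j}" for i
    using that assms(3) by (auto simp: adversary_cap_def touches_def)
  show "{j, Suc j} \<in> path_edges (SP (path_graph n) w a (Suc j))"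
    using PE assms(1) by auto
  fix e
  assume "e \<in> path_edges (SP (path_graph n) w a (Suc j))" "e \<noteq> {j, Suc j}"
  then obtain i where "e = {i, Suc i}" "i \<in> {a..<Suc j}" "i \<noteq> j"
    unfolding PE by blast
  with cap assms(1) show "adversary_cap n F {j, Suc j} < adversary_cap n F e"
    by (simp add: frac_less2)
qed

lemma segment_revealed_by_adversary:
  assumes "a + m < n" "set F \<inter> {a..a + m} = {}"
  shows "(\<lambda>j. {j, Suc j}) ` {a..<a + m} \<subseteq>
         revealed_by n (path_graph n) w (adversary_cap n F) a"
proof
  fix e
  assume "e \<in> (\<lambda>j. {j, Suc j}) ` {a..<a + m}"
  then obtain j where j: "e = {j, Suc j}" "a \<le> j" "j < a + m"
    by auto
  with assms have "e = bottleneck (path_graph n) w (adversary_cap n F) a (Suc j)"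
    by (subst adversary_bottleneck_untouched_segment) auto
  with j assms(1) show "e \<in> revealed_by n (path_graph n) w (adversary_cap n F) a"
    unfolding revealed_by_def by auto
qed

lemma div_eq_if_block: "b * g \<le> x \<Longrightarrow> x < b * g + g \<Longrightarrow> x div g = (b::nat)"
  by (rule div_nat_eqI) (simp_all add: algebra_simps)

lemma block_le_if_less_div:
  assumes "b < n div g"
  shows "0 < g" and "b * g + g \<le> (n::nat)"
proof -
  from assms show "0 < g"
    by (cases g) auto
  with assms show "b * g + g \<le> n"
    using less_eq_div_iff_mult_less_eq[of g "Suc b" n] by simp
qed

lemma block_revealed_by_adversary:
  assumes "b < n div g" "\<forall>x\<in>set F. x div g \<noteq> b"
  shows "(\<lambda>j. {j, Suc j}) ` {b * g..<b * g + (g - 1)} \<subseteq>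
         revealed_by n (path_graph n) w (adversary_cap n F) (b * g)"
proof (rule segment_revealed_by_adversary)
  note g = block_le_if_less_div[OF assms(1)]
  then show "b * g + (g - 1) < n"
    by simp
  from g(1) assms(2) show "set F \<inter> {b * g..b * g + (g - 1)} = {}"
    using div_eq_if_block[of b g] by fastforce
qed

lemma OPT_adversary_ge:
  assumes "k + card (set F) \<le> n div g"
  shows "k * (g - 1) \<le> OPT n (path_graph n) w (adversary_cap n F) k"
proof -
  let ?edge = "\<lambda>j. {j, Suc j}"
  let ?block = "\<lambda>b. {b * g..<b * g + (g - 1)}"
  let ?revealed = "revealed n (path_graph n) w (adversary_cap n F)"
  define free where "free = {..<n div g} - (\<lambda>x. x div g) ` set F"
  have "k \<le> card {..<n div g} - card ((\<lambda>x. x div g) ` set F)"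
    using assms card_image_le[of "set F" "\<lambda>x. x div g"] by simp
  also have "\<dots> \<le> card free"
    unfolding free_def by (rule diff_card_le_card_Diff) simp
  finally obtain T where T: "T \<subseteq> free" "card T = k" "finite T"
    by (rule obtain_subset_with_card_n)
  have T_free: "b < n div g" "\<forall>x\<in>set F. x div g \<noteq> b" if "b \<in> T" for b
    using that T(1) by (auto simp: free_def)
  define S where "S = (\<lambda>b. b * g) ` T"
  have "card (?edge ` (\<Union>b\<in>T. ?block b)) = (\<Sum>b\<in>T. card (?block b))"
  proof -
    have "inj ?edge"
      by (rule injI) (auto simp: doubleton_eq_iff)
    moreover have "x div g = b" if "b \<in> T" "x \<in> ?block b" for b x
      using that by (intro div_eq_if_block) auto
    then have "?block b \<inter> ?block b' = {}" if "b \<in> T" "b' \<in> T" "b \<noteq> b'" for b b'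
      using that by (metis disjoint_iff)
    ultimately show ?thesis
      using T(3) by (simp add: card_image inj_on_subset card_UN_disjoint)
  qed
  also have "\<dots> = k * (g - 1)"
    using T(2) by simp
  finally have "k * (g - 1) = card (?edge ` (\<Union>b\<in>T. ?block b))" ..
  also have "\<dots> \<le> card (?revealed S)"
  proof (rule card_mono)
    show "finite (?revealed S)"
      using T(3) by (simp add: S_def revealed_def revealed_by_def)
    have "?edge ` ?block b \<subseteq> revealed_by n (path_graph n) w (adversary_cap n F) (b * g)"
      if "b \<in> T" for b
      using T_free[OF that] by (rule block_revealed_by_adversary)
    then show "?edge ` (\<Union>b\<in>T. ?block b) \<subseteq> ?revealed S"
      unfolding revealed_def S_def image_UN image_image by blast
  qed
  also have "\<dots> \<le> OPT n (path_graph n) w (adversary_cap n F) k"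
  proof (rule card_revealed_le_OPT)
    show "S \<subseteq> {..<n}"
      using T_free(1) block_le_if_less_div by (fastforce simp: S_def)
    show "card S \<le> k"
      using T(2,3) card_image_le by (auto simp: S_def)
  qed
  finally show ?thesis .
qed

section \<open>The lower bound\<close>

lemma length_adversary_history_le:
  assumes "instance_optimal A n k \<alpha> \<beta>"
  shows "real (length (adversary_history A n N)) \<le> \<alpha> * real k"
proof -
  let ?c = "adversary_cap n (map fst (adversary_history A n N))"
  have "valid_instance n (path_graph n) (\<lambda>_. 1) ?c"
    by (rule valid_instance_path_graph[OF inj_on_adversary_cap])
  with assms have "real (length (run A n (path_graph n) (\<lambda>_. 1) ?c N)) \<le> \<alpha> * real k"
    unfolding instance_optimal_def by blast
  then show ?thesis
    by (simp add: run_adversary[OF prefix_order.refl])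
qed

lemma instance_optimal_block_bound:
  assumes opt: "instance_optimal A n k \<alpha> \<beta>" and "1 \<le> k" "1 \<le> g"
    and blocks: "\<alpha> * real k + real k \<le> real (n div g)"
  shows "real g \<le> 2 * \<alpha> * \<beta> + 1"
proof -
  obtain N :: nat where N: "\<alpha> * real k < real N"
    using reals_Archimedean2 by blast
  define F where "F = map fst (adversary_history A n N)"
  let ?c = "adversary_cap n F"
  let ?revealed =
    "revealed n (path_graph n) (\<lambda>_. 1) ?c (selected A n (path_graph n) (\<lambda>_. 1) ?c)"
  let ?OPT = "OPT n (path_graph n) (\<lambda>_. 1) ?c k"
  have \<beta>: "1 \<le> \<beta>"
    using opt by (simp add: instance_optimal_def)
  have len: "real (length F) \<le> \<alpha> * real k"
    using length_adversary_history_le[OF opt] by (simp add: F_def)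
  with N have "length (adversary_history A n N) < N"
    unfolding F_def by simp
  then have "selected A n (path_graph n) (\<lambda>_. 1) ?c \<subseteq> set F"
    unfolding F_def by (rule selected_adversary_subset)
  then have "card ?revealed \<le> card {e \<in> path_graph n. touches F e}"
    by (intro card_mono revealed_adversary_subset) (simp_all add: finite_path_graph)
  also have "\<dots> \<le> 2 * card (set F)"
    by (rule card_touched_edges_le)
  also have "\<dots> \<le> 2 * length F"
    by (simp add: card_length)
  finally have few: "real (card ?revealed) \<le> 2 * \<alpha> * real k"
    using len by linarith
  have "real (k + card (set F)) \<le> real (n div g)"
    using blocks len card_length[of F] by linarith
  then have "k * (g - 1) \<le> ?OPT"
    by (intro OPT_adversary_ge) simp
  then have "real k * (real g - 1) \<le> real ?OPT"
    using \<open>1 \<le> g\<close> by (metis of_nat_1 of_nat_diff of_nat_le_iff of_nat_mult)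
  also have "\<dots> \<le> \<beta> * real (card ?revealed)"
    using opt valid_instance_path_graph[OF inj_on_adversary_cap] \<beta>
    unfolding instance_optimal_def by (auto simp: divide_le_eq mult.commute)
  also have "\<dots> \<le> \<beta> * (2 * \<alpha> * real k)"
    using few \<beta> by (intro mult_left_mono) auto
  finally have "real k * (real g - 1) \<le> real k * (2 * \<alpha> * \<beta>)"
    by (simp add: algebra_simps)
  with \<open>1 \<le> k\<close> show ?thesis
    by simp
qed

lemma instance_optimal_lower_bound:
  assumes opt: "instance_optimal A n k \<alpha> \<beta>" and k: "1 \<le> k"
  shows "real n \<le> 16 * \<alpha>\<^sup>2 * \<beta> * real k"
proof -
  have \<alpha>: "1 \<le> \<alpha>" and \<beta>: "1 \<le> \<beta>"
    using opt by (auto simp: instance_optimal_def)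
  define a where "a = nat \<lceil>\<alpha>\<rceil>"
  define D where "D = 2 * a * k"
  define g where "g = n div D"
  have a: "\<alpha> \<le> real a" "real a \<le> 2 * \<alpha>" "0 < a"
    using \<alpha> unfolding a_def by linarith+
  have D_lower: "2 * \<alpha> * real k \<le> real D"
    using a(1) by (simp add: D_def mult_right_mono)
  have D_upper: "real D \<le> 4 * \<alpha> * real k"
    using a(2) by (simp add: D_def mult_right_mono)
  have g: "real g \<le> 2 * \<alpha> * \<beta> + 1"
  proof (cases "g = 0")
    case False
    have "D * g \<le> n"
      by (simp add: g_def mult.commute)
    with False have "D \<le> n div g"
      by (simp add: less_eq_div_iff_mult_less_eq)
    moreover have "real k \<le> \<alpha> * real k"
      using mult_right_mono[OF \<alpha>, of "real k"] by simp
    ultimately have "\<alpha> * real k + real k \<le> real (n div g)"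
      using D_lower by linarith
    with False show ?thesis
      by (intro instance_optimal_block_bound[OF opt k]) auto
  qed (use \<alpha> \<beta> in simp)
  have "0 < D"
    using a(3) k by (simp add: D_def)
  then have "n < (g + 1) * D"
    using dividend_less_div_times[of D n] by (simp add: g_def)
  then have "real n < (real g + 1) * real D"
    by (metis of_nat_1 of_nat_add of_nat_less_iff of_nat_mult)
  also have "\<dots> \<le> (2 * \<alpha> * \<beta> + 2) * (4 * \<alpha> * real k)"
    using g D_upper by (intro mult_mono) auto
  also have "\<dots> \<le> 16 * \<alpha>\<^sup>2 * \<beta> * real k"
  proof -
    have "1 \<le> \<alpha> * \<beta>"
      using mult_mono[OF \<alpha> \<beta>] \<alpha> by simp
    then have "2 * \<alpha> * \<beta> + 2 \<le> 4 * \<alpha> * \<beta>"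
      by simp
    then have "(2 * \<alpha> * \<beta> + 2) * (4 * \<alpha> * real k) \<le>
               (4 * \<alpha> * \<beta>) * (4 * \<alpha> * real k)"
      using \<alpha> by (intro mult_right_mono) auto
    then show ?thesis
      by (simp add: power2_eq_square algebra_simps)
  qed
  finally show ?thesis
    by simp
qed

theorem mainTheorem5:
  shows "\<exists>C>0. \<forall>(A::algorithm) n k \<alpha> \<beta>. k \<ge> 1 \<longrightarrow> instance_optimal A n k \<alpha> \<beta> \<longrightarrow>
           \<alpha>^2 * \<beta> \<ge> C * real n / real k"
proof (intro exI[of _ "1 / 16"] conjI allI impI)
  fix A n k \<alpha> \<beta>
  assume "(k::nat) \<ge> 1" "instance_optimal A n k \<alpha> \<beta>"
  then have "real n \<le> 16 * \<alpha>^2 * \<beta> * real k"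
    by (intro instance_optimal_lower_bound)
  with \<open>k \<ge> 1\<close> show "1 / 16 * real n / real k \<le> \<alpha>^2 * \<beta>"
    by (simp add: field_simps)
qed simp

end
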